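(* Run the Unbiased Space Saving sketch with $m$ bins on an i.i.d. stream of items drawn from a discrete distribution with probabilities $p_1 \ge p_2 \ge \cdots$. If $p_1 < 1/m$, then with probability $1$, for all sufficiently large $t$, $0 \le t/m - \hat{N}_{min}(t) \le m(\log t)^2 + m$ and $0 \le \hat{N}_{max}(t) - t/m \le (\log t)^2 + 1$.
   Context: Unbiased Space Saving sketch with $m$ bins: maintain $m$ bins, each an (item, count) pair, counts initialized to $0$. For each new row with item $x_{new}$: if $x_{new}$ is the label of a bin, increment its count by $1$; otherwise choose a bin with the smallest count $\hat{N}_{min}$ (uniformly at random among all bins sharing the smallest count), increment its count by $1$, and with probability $1/(\hat{N}_{min}+1)$ replace its label by $x_{new}$. $\hat{N}_{min}(t)$ and $\hat{N}_{max}(t)$ are the smallest and largest bin counts after $t$ rows. *)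

theory Defs
  imports "HOL-Probability.Probability"
begin

text \<open>Items are natural numbers (item i has
probability p_i).  A state assigns to each bin index j < m a pair
(label, count); the label is None before the bin has ever been labelled.

All randomness is carried by an i.i.d. stream of triples (x, u, v):
x is the new item, u (uniform on [0,1]) selects uniformly among the bins
of smallest count (the floor(u*k)-th of the k tied bins, in index order),
and v (uniform on [0,1]) realises the replacement coin, which succeeds
iff v < 1/(Nmin+1).\<close>

type_synonym uss_state = "nat \<Rightarrow> nat option \<times> nat"

definition uss_init :: uss_state where
  "uss_init = (\<lambda>j. (None, 0))"

definition uss_min :: "nat \<Rightarrow> uss_state \<Rightarrow> nat" where
  "uss_min m s = Min ((\<lambda>j. snd (s j)) ` {..<m})"

definition uss_max :: "nat \<Rightarrow> uss_state \<Rightarrow> nat" where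
  "uss_max m s = Max ((\<lambda>j. snd (s j)) ` {..<m})"

definition uss_step :: "nat \<Rightarrow> uss_state \<Rightarrow> nat \<times> real \<times> real \<Rightarrow> uss_state" where
  "uss_step m s xuv =
     (let (x, u, v) = xuv;
          J = {j. j < m \<and> fst (s j) = Some x}
      in if J \<noteq> {} then
           (let j = Min J in s(j := (fst (s j), snd (s j) + 1)))
         else
           (let nmin = uss_min m s;
                T = sorted_list_of_set {j. j < m \<and> snd (s j) = nmin};
                k = length T;
                j = T ! min (k - 1) (nat \<lfloor>u * real k\<rfloor>);
                lbl = (if v < 1 / (real nmin + 1) then Some x else fst (s j))
            in s(j := (lbl, nmin + 1))))"

primrec uss_state_at :: "nat \<Rightarrow> (nat \<times> real \<times> real) stream \<Rightarrow> nat \<Rightarrow> uss_state" where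
  "uss_state_at m \<omega> 0 = uss_init"
| "uss_state_at m \<omega> (Suc t) = uss_step m (uss_state_at m \<omega> t) (\<omega> !! t)"

definition Nmin :: "nat \<Rightarrow> (nat \<times> real \<times> real) stream \<Rightarrow> nat \<Rightarrow> nat" where
  "Nmin m \<omega> t = uss_min m (uss_state_at m \<omega> t)"

definition Nmax :: "nat \<Rightarrow> (nat \<times> real \<times> real) stream \<Rightarrow> nat \<Rightarrow> nat" where
  "Nmax m \<omega> t = uss_max m (uss_state_at m \<omega> t)"

definition uss_row_measure :: "nat pmf \<Rightarrow> (nat \<times> real \<times> real) measure" where
  "uss_row_measure P = measure_pmf P \<Otimes>\<^sub>M
     (uniform_measure lborel {0..1::real} \<Otimes>\<^sub>M uniform_measure lborel {0..1::real})"

end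

theory Submission
  imports Defs
begin

text \<open>A bin whose count exceeds t/m is never a bin of smallest count, so after the last
time a at which its count was at most a/m it keeps its label and grows only when that
label arrives. Hence every bin count is at most t/m + 1 plus the number of occurrences of
one item in a window of the stream ending at t, and the counts sum to t. An exponential
moment bound shows that if every item has probability at most q < 1/m, then a window of
length n contains more than n/m + L copies of some item with probability at most
n z^(1-L), for a fixed z > 1 depending on q and m. With L = (ln t)^2 these probabilities,
summed over the t + 1 windows ending at t, are summable in t, and Borel-Cantelli
concludes.\<close>

lemma uss_step_cases:
  assumes "m > 0"
  obtains j l where "j < m" "uss_step m s xuv = s(j := (l, snd (s j) + 1))"
    "l = fst (s j) \<and> fst (s j) = Some (fst xuv) \<or> snd (s j) = uss_min m s"
proof -
  obtain x u v where xuv: "xuv = (x, u, v)" by (cases xuv) auto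
  show thesis
  proof (cases "{j. j < m \<and> fst (s j) = Some x} = {}")
    case False
    define J where "J = {j. j < m \<and> fst (s j) = Some x}"
    have "Min J \<in> J" using False by (intro Min_in) (auto simp: J_def)
    moreover have "uss_step m s xuv = s(Min J := (fst (s (Min J)), snd (s (Min J)) + 1))"
      using False by (simp add: uss_step_def Let_def J_def xuv)
    ultimately show thesis by (intro that[of "Min J"]) (auto simp: J_def xuv)
  next
    case True
    define S where "S = {j. j < m \<and> snd (s j) = uss_min m s}"
    define T where "T = sorted_list_of_set S"
    define i where "i = min (length T - 1) (nat \<lfloor>u * real (length T)\<rfloor>)"
    have "uss_min m s \<in> (\<lambda>j. snd (s j)) ` {..<m}"
      unfolding uss_min_def using assms by (intro Min_in) auto
    then have "S \<noteq> {}" by (auto simp: S_def)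
    then have "set T = S" "length T = card S" "T \<noteq> []" by (auto simp: T_def S_def)
    have "i < length T" using \<open>T \<noteq> []\<close> unfolding i_def by (intro min.strict_coboundedI1) simp
    then have "T ! i \<in> S" using \<open>set T = S\<close> nth_mem by blast
    moreover have "uss_step m s xuv = s(T ! i :=
        (if v < 1 / (real (uss_min m s) + 1) then Some x else fst (s (T ! i)), uss_min m s + 1))"
      using True \<open>length T = card S\<close>
      by (simp add: uss_step_def Let_def xuv S_def[symmetric] T_def[symmetric] i_def) blast
    ultimately show thesis by (intro that[of "T ! i"]) (auto simp: S_def)
  qed
qed

lemma count_uss_step_le: "m > 0 \<Longrightarrow> snd (uss_step m s xuv j) \<le> snd (s j) + 1"
  by (rule uss_step_cases[of m s xuv]) auto

lemma uss_step_not_minimal: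
  assumes "m > 0" "snd (s j) \<noteq> uss_min m s"
  shows "fst (uss_step m s xuv j) = fst (s j)"
    and "snd (uss_step m s xuv j) \<le> snd (s j) + (if fst (s j) = Some (fst xuv) then 1 else 0)"
proof -
  obtain k l where "uss_step m s xuv = s(k := (l, snd (s k) + 1))"
    "l = fst (s k) \<and> fst (s k) = Some (fst xuv) \<or> snd (s k) = uss_min m s"
    using uss_step_cases[OF assms(1)] by metis
  then show "fst (uss_step m s xuv j) = fst (s j)"
    and "snd (uss_step m s xuv j) \<le> snd (s j) + (if fst (s j) = Some (fst xuv) then 1 else 0)"
    using assms(2) by (cases "j = k"; auto)+
qed

lemma sum_counts_uss_state_at:
  assumes "m > 0"
  shows "(\<Sum>j<m. snd (uss_state_at m \<omega> t j)) = t"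
proof (induction t)
  case 0
  then show ?case by (simp add: uss_init_def)
next
  case (Suc t)
  let ?s = "uss_state_at m \<omega> t"
  obtain j l where j: "j < m" and step: "uss_step m ?s (\<omega> !! t) = ?s(j := (l, snd (?s j) + 1))"
    using uss_step_cases[OF assms] by metis
  have "(\<Sum>i<m. snd ((?s(j := (l, snd (?s j) + 1))) i))
      = snd (?s j) + 1 + (\<Sum>i\<in>{..<m} - {j}. snd (?s i))"
    using j by (subst sum.remove[of _ j]) (auto intro!: sum.cong)
  also have "\<dots> = (\<Sum>i<m. snd (?s i)) + 1"
    using j by (subst (2) sum.remove[of _ j]) auto
  finally show ?case using Suc by (simp add: step)
qed

lemma mult_uss_min_le_sum: "m * uss_min m s \<le> (\<Sum>j<m. snd (s j))"
  using sum_mono[of "{..<m}" "\<lambda>_. uss_min m s" "\<lambda>j. snd (s j)"]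
  by (simp add: uss_min_def)

lemma uss_min_le_average:
  assumes "m > 0"
  shows "real (uss_min m (uss_state_at m \<omega> t)) \<le> real t / real m"
proof -
  have "m * uss_min m (uss_state_at m \<omega> t) \<le> t"
    using mult_uss_min_le_sum sum_counts_uss_state_at[OF assms] by metis
  then show ?thesis
    using assms by (simp add: le_divide_eq mult.commute flip: of_nat_mult)
qed

definition occurrences :: "nat option \<Rightarrow> (nat \<times> 'b) stream \<Rightarrow> nat \<Rightarrow> nat \<Rightarrow> nat" where
  "occurrences lab \<omega> a n = (\<Sum>i<n. if lab = Some (fst (\<omega> !! (a + i))) then 1 else 0)"

lemma count_le_occurrences:
  assumes "m > 0" "j < m"
  shows "\<exists>a\<le>t. real (snd (uss_state_at m \<omega> t j))
           \<le> real a / real m + 1 + real (occurrences (fst (uss_state_at m \<omega> t j)) \<omega> a (t - a))"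
proof (induction t)
  case 0
  then show ?case by (auto simp: uss_init_def)
next
  case (Suc t)
  let ?s = "uss_state_at m \<omega> t"
  show ?case
  proof (cases "real (snd (?s j)) \<le> real t / real m")
    case True
    have "snd (uss_state_at m \<omega> (Suc t) j) \<le> snd (?s j) + 1"
      using count_uss_step_le[OF assms(1)] by simp
    then have "real (snd (uss_state_at m \<omega> (Suc t) j)) \<le> real (snd (?s j)) + 1"
      by linarith
    also have "\<dots> \<le> real (Suc t) / real m + 1"
      using True divide_right_mono[of "real t" "real (Suc t)" "real m"] by simp
    finally show ?thesis by (intro exI[of _ "Suc t"]) (simp add: occurrences_def)
  next
    case False
    then have "snd (?s j) \<noteq> uss_min m ?s" using uss_min_le_average[OF assms(1)] by force
    note not_minimal = uss_step_not_minimal[OF assms(1) this, of "\<omega> !! t"]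
    obtain a where a: "a \<le> t"
      "real (snd (?s j)) \<le> real a / real m + 1 + real (occurrences (fst (?s j)) \<omega> a (t - a))"
      using Suc.IH by blast
    have "occurrences (fst (?s j)) \<omega> a (Suc t - a) = occurrences (fst (?s j)) \<omega> a (t - a)
        + (if fst (?s j) = Some (fst (\<omega> !! t)) then 1 else 0)"
      using a(1) by (simp add: occurrences_def Suc_diff_le)
    then show ?thesis using a not_minimal by (intro exI[of _ a]) auto
  qed
qed

lemma count_le_if_occurrences_le:
  assumes "m > 0" "j < m" "L \<ge> 0"
    and light: "\<And>a l. a \<le> t \<Longrightarrow> real (occurrences (Some l) \<omega> a (t - a)) \<le> real (t - a) / real m + L"
  shows "real (snd (uss_state_at m \<omega> t j)) \<le> real t / real m + L + 1"
proof -
  obtain a where a: "a \<le> t" and count: "real (snd (uss_state_at m \<omega> t j))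
      \<le> real a / real m + 1 + real (occurrences (fst (uss_state_at m \<omega> t j)) \<omega> a (t - a))"
    using count_le_occurrences[OF assms(1,2)] by blast
  have split: "real a / real m + real (t - a) / real m = real t / real m"
    using a by (simp add: add_divide_distrib[symmetric])
  show ?thesis
  proof (cases "fst (uss_state_at m \<omega> t j)")
    case None
    then have "real (snd (uss_state_at m \<omega> t j)) \<le> real a / real m + 1"
      using count by (simp add: occurrences_def)
    moreover have "0 \<le> real (t - a) / real m" by simp
    ultimately show ?thesis using split assms(3) by linarith
  next
    case (Some l)
    then show ?thesis using count split light[OF a, of l] by simp
  qed
qed

lemma sum_le_member_plus_card_bound:
  fixes f :: "'a \<Rightarrow> real"
  assumes "finite A" "j \<in> A" "\<And>i. i \<in> A \<Longrightarrow> f i \<le> B"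
  shows "sum f A \<le> f j + real (card A - 1) * B"
proof -
  have "sum f A = f j + sum f (A - {j})" using assms(1,2) by (rule sum.remove)
  also have "sum f (A - {j}) \<le> real (card (A - {j})) * B"
    using assms(3) by (intro sum_bounded_above) auto
  finally show ?thesis using assms(1,2) by simp
qed

lemma Nmin_Nmax_deviation_if_occurrences_le:
  assumes "m > 0" "L \<ge> 0"
    and light: "\<And>a l. a \<le> t \<Longrightarrow> real (occurrences (Some l) \<omega> a (t - a)) \<le> real (t - a) / real m + L"
  shows "0 \<le> real t / real m - real (Nmin m \<omega> t)
             \<and> real t / real m - real (Nmin m \<omega> t) \<le> real m * L + real m
             \<and> 0 \<le> real (Nmax m \<omega> t) - real t / real m
             \<and> real (Nmax m \<omega> t) - real t / real m \<le> L + 1"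
proof -
  let ?c = "\<lambda>j. real (snd (uss_state_at m \<omega> t j))"
  have sum: "(\<Sum>j<m. ?c j) = real t"
    using sum_counts_uss_state_at[OF assms(1)] by (metis of_nat_sum)
  have bins: "?c j \<le> real t / real m + L + 1" if "j < m" for j
    by (rule count_le_if_occurrences_le[OF assms(1) that assms(2) light])
  have "Nmax m \<omega> t \<in> (\<lambda>j. snd (uss_state_at m \<omega> t j)) ` {..<m}"
    unfolding Nmax_def uss_max_def using assms(1) by (intro Max_in) auto
  then have max_upper: "real (Nmax m \<omega> t) - real t / real m \<le> L + 1" using bins by force
  have "(\<Sum>j<m. ?c j) \<le> real (card {..<m}) * real (Nmax m \<omega> t)"
    unfolding Nmax_def uss_max_def by (intro sum_bounded_above) (auto intro!: Max_ge)
  then have "real t \<le> real m * real (Nmax m \<omega> t)" using sum by simp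
  then have max_lower: "0 \<le> real (Nmax m \<omega> t) - real t / real m"
    using assms(1) by (simp add: divide_le_eq mult.commute)
  have min_lower: "0 \<le> real t / real m - real (Nmin m \<omega> t)"
    using uss_min_le_average[OF assms(1)] by (simp add: Nmin_def)
  have "Nmin m \<omega> t \<in> (\<lambda>j. snd (uss_state_at m \<omega> t j)) ` {..<m}"
    unfolding Nmin_def uss_min_def using assms(1) by (intro Min_in) auto
  then obtain j where j: "j < m" "snd (uss_state_at m \<omega> t j) = Nmin m \<omega> t" by auto
  have "real t \<le> real (Nmin m \<omega> t) + (real m - 1) * (real t / real m + L + 1)"
    using sum_le_member_plus_card_bound[of "{..<m}" j ?c] j bins assms(1)
    by (simp add: sum of_nat_diff)
  moreover have "(real m - 1) * (real t / real m) = real t - real t / real m"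
    using assms(1) by (simp add: field_simps)
  ultimately have "real t / real m - real (Nmin m \<omega> t) \<le> (real m - 1) * (L + 1)"
    by (simp add: algebra_simps)
  also have "\<dots> \<le> real m * L + real m" using assms(2) by (simp add: algebra_simps)
  finally show ?thesis using min_lower max_lower max_upper by simp
qed

context prob_space
begin

lemma nn_integral_stream_space_sdrop:
  assumes [measurable]: "f \<in> borel_measurable (stream_space M)"
  shows "(\<integral>\<^sup>+\<omega>. f (sdrop a \<omega>) \<partial>stream_space M) = (\<integral>\<^sup>+\<omega>. f \<omega> \<partial>stream_space M)"
proof (induction a)
  case (Suc a)
  have "(\<integral>\<^sup>+\<omega>. f (sdrop (Suc a) \<omega>) \<partial>stream_space M)
      = (\<integral>\<^sup>+x. (\<integral>\<^sup>+\<omega>. f (sdrop (Suc a) (x ## \<omega>)) \<partial>stream_space M) \<partial>M)"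
    by (rule nn_integral_stream_space) measurable
  also have "\<dots> = (\<integral>\<^sup>+\<omega>. f \<omega> \<partial>stream_space M)"
    using Suc by (simp add: emeasure_space_1)
  finally show ?case .
qed simp

lemma nn_integral_stream_space_prod:
  assumes [measurable]: "\<And>i. f i \<in> borel_measurable M"
  shows "(\<integral>\<^sup>+\<omega>. (\<Prod>i<n. f i (\<omega> !! i)) \<partial>stream_space M) = (\<Prod>i<n. \<integral>\<^sup>+x. f i x \<partial>M)"
  using assms
proof (induction n arbitrary: f)
  case 0
  interpret S: prob_space "stream_space M" by (rule prob_space_stream_space)
  show ?case by (simp add: S.emeasure_space_1)
next
  case (Suc n)
  note [measurable] = Suc.prems
  have [measurable]: "(\<lambda>\<omega>. \<Prod>i<n. f (Suc i) (\<omega> !! i)) \<in> borel_measurable (stream_space M)"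
    by measurable
  have "(\<integral>\<^sup>+\<omega>. (\<Prod>i<Suc n. f i (\<omega> !! i)) \<partial>stream_space M)
      = (\<integral>\<^sup>+x. (\<integral>\<^sup>+\<omega>. (\<Prod>i<Suc n. f i ((x ## \<omega>) !! i)) \<partial>stream_space M) \<partial>M)"
    by (rule nn_integral_stream_space) measurable
  also have "\<dots> = (\<integral>\<^sup>+x. f 0 x * (\<integral>\<^sup>+\<omega>. (\<Prod>i<n. f (Suc i) (\<omega> !! i)) \<partial>stream_space M) \<partial>M)"
    by (simp only: prod.lessThan_Suc_shift snth.simps stream.sel nn_integral_cmult
        \<open>(\<lambda>\<omega>. \<Prod>i<n. f (Suc i) (\<omega> !! i)) \<in> borel_measurable (stream_space M)\<close>)
  also have "\<dots> = (\<integral>\<^sup>+x. f 0 x \<partial>M) * (\<Prod>i<n. \<integral>\<^sup>+x. f (Suc i) x \<partial>M)"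
    using Suc.IH[of "\<lambda>i. f (Suc i)"] by (simp add: nn_integral_multc)
  also have "\<dots> = (\<Prod>i<Suc n. \<integral>\<^sup>+x. f i x \<partial>M)"
    by (simp only: prod.lessThan_Suc_shift)
  finally show ?case .
qed

lemma nn_integral_stream_space_prod_shift:
  assumes [measurable]: "\<And>i. f i \<in> borel_measurable M"
  shows "(\<integral>\<^sup>+\<omega>. (\<Prod>i<n. f i (\<omega> !! (a + i))) \<partial>stream_space M) = (\<Prod>i<n. \<integral>\<^sup>+x. f i x \<partial>M)"
  using nn_integral_stream_space_sdrop[of "\<lambda>\<omega>. \<Prod>i<n. f i (\<omega> !! i)" a]
  by (simp add: sdrop_snth nn_integral_stream_space_prod)

end

lemma prob_space_uss_row_measure: "prob_space (uss_row_measure P)"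
  unfolding uss_row_measure_def
  by (intro prob_space_pair prob_space_measure_pmf prob_space_uniform_measure) auto

lemma measurable_fst_uss_row_measure:
  "(\<lambda>x. h (fst x)) \<in> borel_measurable (uss_row_measure P)"
  unfolding uss_row_measure_def by measurable

lemma measurable_snth_fst [measurable]:
  "(\<lambda>\<omega>. h (fst (\<omega> !! k))) \<in> borel_measurable (stream_space (uss_row_measure P))"
  by (rule measurable_compose[OF measurable_snth measurable_fst_uss_row_measure])

lemma nn_integral_uss_row_measure_fst:
  "(\<integral>\<^sup>+x. h (fst x) \<partial>uss_row_measure P) = (\<integral>\<^sup>+y. h y \<partial>measure_pmf P)"
proof -
  interpret U: prob_space "uniform_measure lborel {0..1::real} \<Otimes>\<^sub>M uniform_measure lborel {0..1::real}"
    by (intro prob_space_pair prob_space_uniform_measure) auto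
  have "(\<integral>\<^sup>+x. h (fst x) \<partial>uss_row_measure P)
      = (\<integral>\<^sup>+y. h y \<partial>distr (uss_row_measure P) (measure_pmf P) fst)"
    unfolding uss_row_measure_def by (subst nn_integral_distr) auto
  also have "distr (uss_row_measure P) (measure_pmf P) fst = measure_pmf P"
    unfolding uss_row_measure_def by (rule U.distr_pair_fst)
  finally show ?thesis .
qed

lemma suminf_ennreal_pmf: "(\<Sum>l. ennreal (pmf P l)) = 1"
proof -
  have "(\<Sum>l. ennreal (pmf P l)) = (\<integral>\<^sup>+l. ennreal (pmf P l) \<partial>count_space UNIV)"
    by (simp add: nn_integral_count_space_nat)
  also have "\<dots> = 1" by (simp add: nn_integral_pmf measure_pmf.emeasure_space_1)
  finally show ?thesis .
qed

definition tilt :: "real \<Rightarrow> nat \<Rightarrow> nat \<Rightarrow> ennreal" where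
  "tilt z l y = ennreal (if y = l then z else 1)"

definition marked_tilt :: "real \<Rightarrow> nat \<Rightarrow> nat \<Rightarrow> ennreal" where
  "marked_tilt z l y = ennreal (if y = l then z else 0)"

lemma nn_integral_tilt:
  assumes "z \<ge> 1"
  shows "(\<integral>\<^sup>+y. tilt z l y \<partial>measure_pmf P) = ennreal (1 + (z - 1) * pmf P l)"
proof -
  have "tilt z l y = 1 + ennreal (z - 1) * indicator {l} y" for y
    using assms ennreal_plus[of 1 "z - 1"] by (auto simp: tilt_def)
  then have "(\<integral>\<^sup>+y. tilt z l y \<partial>measure_pmf P) = 1 + ennreal (z - 1) * emeasure (measure_pmf P) {l}"
    by (simp add: nn_integral_add nn_integral_cmult_indicator measure_pmf.emeasure_space_1)
  also have "\<dots> = ennreal (1 + (z - 1) * pmf P l)"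
    using assms by (simp add: emeasure_pmf_single ennreal_plus ennreal_mult[symmetric])
  finally show ?thesis .
qed

lemma nn_integral_marked_tilt:
  assumes "z \<ge> 1"
  shows "(\<integral>\<^sup>+y. marked_tilt z l y \<partial>measure_pmf P) = ennreal (z * pmf P l)"
proof -
  have "marked_tilt z l y = ennreal z * indicator {l} y" for y
    by (auto simp: marked_tilt_def)
  then show ?thesis
    using assms by (simp add: nn_integral_cmult_indicator emeasure_pmf_single ennreal_mult)
qed

lemma prod_tilt:
  assumes "z \<ge> 1"
  shows "(\<Prod>i<n. tilt z l (fst (\<omega> !! (a + i)))) = ennreal (z ^ occurrences (Some l) \<omega> a n)"
proof -
  have "(\<Prod>i<n. if fst (\<omega> !! (a + i)) = l then z else 1) = z ^ occurrences (Some l) \<omega> a n"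
    by (induction n) (auto simp: occurrences_def)
  then show ?thesis
    unfolding tilt_def using assms by (subst prod_ennreal) auto
qed

text \<open>The sum equals k z^k, where k is the number of occurrences of l in the window;
its product form makes the expectation computable by independence of the rows.\<close>
definition tilted_occurrences :: "real \<Rightarrow> nat \<Rightarrow> nat \<Rightarrow> nat \<Rightarrow> (nat \<times> 'b) stream \<Rightarrow> ennreal" where
  "tilted_occurrences z l a n \<omega> =
     (\<Sum>j<n. \<Prod>i<n. (if i = j then marked_tilt else tilt) z l (fst (\<omega> !! (a + i))))"

lemma power_occurrences_le_tilted_occurrences:
  assumes "z \<ge> 1" "occurrences (Some l) \<omega> a n > 0"
  shows "ennreal (z ^ occurrences (Some l) \<omega> a n) \<le> tilted_occurrences z l a n \<omega>"
proof -
  have "\<exists>j<n. fst (\<omega> !! (a + j)) = l"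
  proof (rule ccontr)
    assume "\<not> ?thesis"
    then have "occurrences (Some l) \<omega> a n = 0" by (auto simp: occurrences_def intro!: sum.neutral)
    with assms(2) show False by simp
  qed
  then obtain j where j: "j < n" "fst (\<omega> !! (a + j)) = l" by blast
  have "ennreal (z ^ occurrences (Some l) \<omega> a n) = (\<Prod>i<n. tilt z l (fst (\<omega> !! (a + i))))"
    using assms(1) by (rule prod_tilt[symmetric])
  also have "\<dots> = (\<Prod>i<n. (if i = j then marked_tilt else tilt) z l (fst (\<omega> !! (a + i))))"
    using j by (intro prod.cong) (auto simp: tilt_def marked_tilt_def)
  also have "\<dots> \<le> tilted_occurrences z l a n \<omega>"
    unfolding tilted_occurrences_def using j(1) by (intro member_le_sum) auto
  finally show ?thesis .
qed

lemma prod_if_eq_lessThan: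
  assumes "j < n"
  shows "(\<Prod>i<n. if i = j then x else y) = x * y ^ (n - 1)"
proof -
  have "(\<Prod>i<n. if i = j then x else y) = x * (\<Prod>i\<in>{..<n} - {j}. y)"
    using assms by (subst prod.remove[of _ j]) (auto intro!: prod.cong)
  then show ?thesis using assms by simp
qed

lemma sum_ennreal_mult_power:
  assumes "0 \<le> x" "0 \<le> y"
  shows "(\<Sum>j<n. ennreal x * ennreal y ^ k) = ennreal (real n * x * y ^ k)"
  using assms by (simp add: ennreal_mult ennreal_power ennreal_of_nat_eq_real_of_nat mult.assoc)

lemma nn_integral_tilted_occurrences:
  assumes "z \<ge> 1"
  shows "(\<integral>\<^sup>+\<omega>. tilted_occurrences z l a n \<omega> \<partial>stream_space (uss_row_measure P))
       = ennreal (real n * z * pmf P l * (1 + (z - 1) * pmf P l) ^ (n - 1))"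
proof -
  interpret R: prob_space "uss_row_measure P" by (rule prob_space_uss_row_measure)
  have "(\<integral>\<^sup>+\<omega>. tilted_occurrences z l a n \<omega> \<partial>stream_space (uss_row_measure P))
     = (\<Sum>j<n. \<integral>\<^sup>+\<omega>. (\<Prod>i<n. (if i = j then marked_tilt else tilt) z l (fst (\<omega> !! (a + i))))
          \<partial>stream_space (uss_row_measure P))"
    unfolding tilted_occurrences_def by (rule nn_integral_sum) measurable
  also have "\<dots>
     = (\<Sum>j<n. \<Prod>i<n. \<integral>\<^sup>+x. (if i = j then marked_tilt else tilt) z l (fst x) \<partial>uss_row_measure P)"
    by (intro sum.cong refl R.nn_integral_stream_space_prod_shift measurable_fst_uss_row_measure)
  also have "\<dots> = (\<Sum>j<n. \<Prod>i<n. if i = j then ennreal (z * pmf P l) else ennreal (1 + (z - 1) * pmf P l))"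
    using assms by (intro sum.cong prod.cong refl) (simp add: nn_integral_uss_row_measure_fst
        nn_integral_tilt nn_integral_marked_tilt)
  also have "\<dots> = (\<Sum>j<n. ennreal (z * pmf P l) * ennreal (1 + (z - 1) * pmf P l) ^ (n - 1))"
    by (intro sum.cong refl prod_if_eq_lessThan) auto
  also have "\<dots> = ennreal (real n * (z * pmf P l) * (1 + (z - 1) * pmf P l) ^ (n - 1))"
    by (rule sum_ennreal_mult_power) (use assms in auto)
  finally show ?thesis by (simp only: mult.assoc)
qed

definition heavy_window :: "nat pmf \<Rightarrow> nat \<Rightarrow> nat \<Rightarrow> real \<Rightarrow> (nat \<times> real \<times> real) stream set" where
  "heavy_window P a n K =
     {\<omega> \<in> space (stream_space (uss_row_measure P)). \<exists>l. K < real (occurrences (Some l) \<omega> a n)}"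

lemma heavy_window_sets [measurable]: "heavy_window P a n K \<in> sets (stream_space (uss_row_measure P))"
  unfolding heavy_window_def occurrences_def uss_row_measure_def by measurable

lemma indicator_heavy_window_le:
  assumes "z \<ge> 1" "K \<ge> 0"
  shows "ennreal (z powr K) * indicator (heavy_window P a n K) \<omega> \<le> (\<Sum>l. tilted_occurrences z l a n \<omega>)"
proof (cases "\<omega> \<in> heavy_window P a n K")
  case True
  then obtain l where l: "K < real (occurrences (Some l) \<omega> a n)" unfolding heavy_window_def by auto
  have "z powr K \<le> z ^ occurrences (Some l) \<omega> a n"
    using l assms by (simp add: powr_realpow[symmetric] powr_mono)
  also have "ennreal \<dots> \<le> tilted_occurrences z l a n \<omega>"
    using l assms by (intro power_occurrences_le_tilted_occurrences) auto
  also have "\<dots> \<le> (\<Sum>l. tilted_occurrences z l a n \<omega>)"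
    using sum_le_suminf[OF summableI, of "{l}"] by simp
  finally show ?thesis using True by (simp add: ennreal_leI)
qed simp

lemma measure_heavy_window_le:
  assumes "z \<ge> 1" "K \<ge> 0" "\<And>l. pmf P l \<le> q"
  shows "measure (stream_space (uss_row_measure P)) (heavy_window P a n K) * z powr K
           \<le> real n * z * (1 + (z - 1) * q) ^ (n - 1)"
proof -
  interpret R: prob_space "uss_row_measure P" by (rule prob_space_uss_row_measure)
  interpret S: prob_space "stream_space (uss_row_measure P)" by (rule R.prob_space_stream_space)
  define C where "C = real n * z * (1 + (z - 1) * q) ^ (n - 1)"
  have "0 \<le> q" using assms(3)[of 0] pmf_nonneg[of P 0] by linarith
  then have "0 \<le> C" unfolding C_def using assms(1) by auto
  have "ennreal (z powr K) * emeasure (stream_space (uss_row_measure P)) (heavy_window P a n K)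
      = (\<integral>\<^sup>+\<omega>. ennreal (z powr K) * indicator (heavy_window P a n K) \<omega> \<partial>stream_space (uss_row_measure P))"
    by (simp add: nn_integral_cmult_indicator)
  also have "\<dots> \<le> (\<integral>\<^sup>+\<omega>. (\<Sum>l. tilted_occurrences z l a n \<omega>) \<partial>stream_space (uss_row_measure P))"
    by (intro nn_integral_mono indicator_heavy_window_le assms(1,2))
  also have "\<dots> = (\<Sum>l. \<integral>\<^sup>+\<omega>. tilted_occurrences z l a n \<omega> \<partial>stream_space (uss_row_measure P))"
    by (rule nn_integral_suminf) (simp add: tilted_occurrences_def)
  also have "\<dots> = (\<Sum>l. ennreal (real n * z * pmf P l * (1 + (z - 1) * pmf P l) ^ (n - 1)))"
    using nn_integral_tilted_occurrences[OF assms(1)] by simp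
  also have "\<dots> \<le> (\<Sum>l. ennreal (pmf P l) * ennreal C)"
  proof (intro suminf_le summableI)
    fix l
    have "(1 + (z - 1) * pmf P l) ^ (n - 1) \<le> (1 + (z - 1) * q) ^ (n - 1)"
      using assms by (intro power_mono) (auto intro!: mult_left_mono)
    then have "real n * z * pmf P l * (1 + (z - 1) * pmf P l) ^ (n - 1) \<le> pmf P l * C"
      using assms(1) unfolding C_def by (simp add: mult_left_mono algebra_simps)
    then show "ennreal (real n * z * pmf P l * (1 + (z - 1) * pmf P l) ^ (n - 1)) \<le> ennreal (pmf P l) * ennreal C"
      by (simp add: ennreal_mult'[symmetric] ennreal_leI)
  qed
  also have "\<dots> = ennreal C" by (simp add: suminf_ennreal_pmf)
  finally have "ennreal (z powr K * measure (stream_space (uss_row_measure P)) (heavy_window P a n K)) \<le> ennreal C"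
    by (simp add: S.emeasure_eq_measure ennreal_mult)
  then show ?thesis using \<open>0 \<le> C\<close> by (simp add: C_def mult.commute)
qed

lemma exists_powr_base:
  assumes "m > 0" "0 \<le> q" "q < 1 / real m"
  obtains z where "1 < z" "1 + (z - 1) * q \<le> z powr (1 / real m)"
proof -
  define r where "r = max (q * real m) (1/2)"
  have r: "1/2 \<le> r" "r < 1" "q * real m \<le> r"
    using assms by (auto simp: r_def field_simps)
  define z where "z = 1 / r"
  have z: "1 < z" "z * r = 1" using r by (auto simp: z_def field_simps)
  have "(z - 1) * q \<le> (z - 1) * (r / real m)"
    using z r assms(1) by (intro mult_left_mono) (auto simp: field_simps)
  also have "\<dots> = (1 - r) / real m" using z by (simp add: algebra_simps)
  also have "\<dots> \<le> ln z / real m"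
    using ln_le_minus_one[of r] r assms(1) by (intro divide_right_mono) (auto simp: z_def ln_div)
  finally have "1 + (z - 1) * q \<le> 1 + ln z / real m" by simp
  also have "\<dots> \<le> exp (ln z / real m)" by (rule exp_ge_add_one_self)
  also have "\<dots> = z powr (1 / real m)" using z by (simp add: powr_def)
  finally show thesis using z(1) that by blast
qed

lemma measure_heavy_window_le_powr:
  assumes "z > 1" "1 + (z - 1) * q \<le> z powr (1 / real m)" "L \<ge> 0" "\<And>l. pmf P l \<le> q"
  shows "measure (stream_space (uss_row_measure P)) (heavy_window P a n (real n / real m + L))
           \<le> real n * z / z powr L"
proof -
  have "0 \<le> q" using assms(4)[of 0] pmf_nonneg[of P 0] by linarith
  have "(1 + (z - 1) * q) ^ (n - 1) \<le> (1 + (z - 1) * q) ^ n"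
    using assms(1) \<open>0 \<le> q\<close> by (intro power_increasing) auto
  also have "\<dots> \<le> (z powr (1 / real m)) ^ n"
    using assms(1,2) \<open>0 \<le> q\<close> by (intro power_mono) auto
  also have "\<dots> = z powr (real n / real m)"
    using assms(1) by (simp add: powr_realpow[symmetric] powr_powr)
  finally have "(1 + (z - 1) * q) ^ (n - 1) \<le> z powr (real n / real m)" .
  have "measure (stream_space (uss_row_measure P)) (heavy_window P a n (real n / real m + L))
        * z powr (real n / real m + L) \<le> real n * z * (1 + (z - 1) * q) ^ (n - 1)"
    using measure_heavy_window_le[of z "real n / real m + L" P q a n] assms by simp
  also have "\<dots> \<le> real n * z * z powr (real n / real m)"
    using \<open>(1 + (z - 1) * q) ^ (n - 1) \<le> z powr (real n / real m)\<close> assms(1)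
    by (intro mult_left_mono) auto
  finally have "(measure (stream_space (uss_row_measure P)) (heavy_window P a n (real n / real m + L))
        * z powr L) * z powr (real n / real m) \<le> (real n * z) * z powr (real n / real m)"
    by (simp add: powr_add mult_ac)
  then have "measure (stream_space (uss_row_measure P)) (heavy_window P a n (real n / real m + L))
        * z powr L \<le> real n * z"
    by (rule mult_right_le_imp_le) (use assms(1) in simp)
  then show ?thesis using assms(1) by (simp add: pos_le_divide_eq)
qed

lemma measure_heavy_windows_le:
  assumes "z > 1" "1 + (z - 1) * q \<le> z powr (1 / real m)" "L \<ge> 0" "\<And>l. pmf P l \<le> q"
  shows "measure (stream_space (uss_row_measure P))
           (\<Union>a\<le>t. heavy_window P a (t - a) (real (t - a) / real m + L))
         \<le> real (Suc t) * real t * z / z powr L"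
proof -
  interpret R: prob_space "uss_row_measure P" by (rule prob_space_uss_row_measure)
  interpret S: prob_space "stream_space (uss_row_measure P)" by (rule R.prob_space_stream_space)
  have "measure (stream_space (uss_row_measure P))
           (\<Union>a\<le>t. heavy_window P a (t - a) (real (t - a) / real m + L))
      \<le> (\<Sum>a\<le>t. measure (stream_space (uss_row_measure P))
           (heavy_window P a (t - a) (real (t - a) / real m + L)))"
    by (intro measure_subadditive_finite) (auto simp: S.emeasure_eq_measure)
  also have "\<dots> \<le> (\<Sum>a\<le>t. real t * z / z powr L)"
  proof (intro sum_mono)
    fix a
    have "measure (stream_space (uss_row_measure P)) (heavy_window P a (t - a) (real (t - a) / real m + L))
        \<le> real (t - a) * z / z powr L"
      by (rule measure_heavy_window_le_powr[OF assms])
    also have "\<dots> \<le> real t * z / z powr L"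
      using assms(1) by (intro divide_right_mono mult_right_mono) auto
    finally show "measure (stream_space (uss_row_measure P))
        (heavy_window P a (t - a) (real (t - a) / real m + L)) \<le> real t * z / z powr L" .
  qed
  finally show ?thesis by simp
qed

lemma summable_poly_div_powr_ln_squared:
  fixes z :: real
  assumes "z > 1"
  shows "summable (\<lambda>t. real (Suc t) * real t * z / z powr ((ln (real t))^2))"
proof (rule summable_comparison_test_ev)
  show "summable (\<lambda>t. 2 * z * inverse (real t ^ 2))"
    by (intro summable_mult inverse_power_summable) auto
  have "ln z > 0" using assms by simp
  show "\<forall>\<^sub>F t in sequentially.
      norm (real (Suc t) * real t * z / z powr (ln (real t))\<^sup>2) \<le> 2 * z * inverse (real t ^ 2)"
    using eventually_ge_at_top[of "nat \<lceil>exp (4 / ln z)\<rceil> + 1"]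
  proof (rule eventually_mono)
    fix t assume "nat \<lceil>exp (4 / ln z)\<rceil> + 1 \<le> t"
    then have "1 \<le> real t" "exp (4 / ln z) \<le> real t" by linarith+
    then have "4 / ln z \<le> ln (real t)" by (simp add: ln_ge_iff)
    then have "4 \<le> ln z * ln (real t)" using \<open>ln z > 0\<close> by (simp add: field_simps)
    then have "4 * ln (real t) \<le> (ln z * ln (real t)) * ln (real t)"
      using \<open>1 \<le> real t\<close> by (intro mult_right_mono) auto
    then have "4 * ln (real t) \<le> (ln (real t))^2 * ln z"
      by (simp add: power2_eq_square mult_ac)
    then have t4: "real t ^ 4 \<le> z powr ((ln (real t))^2)"
      using \<open>1 \<le> real t\<close> assms by (simp add: powr_def flip: powr_realpow)
    have "real (Suc t) * real t * z / z powr (ln (real t))\<^sup>2 \<le> (2 * real t) * real t * z / real t ^ 4"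
      using t4 \<open>1 \<le> real t\<close> assms by (intro frac_le mult_right_mono) auto
    also have "\<dots> = 2 * z * inverse (real t ^ 2)"
      using \<open>1 \<le> real t\<close> by (simp add: field_simps power2_eq_square power4_eq_xxxx)
    finally show "norm (real (Suc t) * real t * z / z powr (ln (real t))\<^sup>2) \<le> 2 * z * inverse (real t ^ 2)"
      using assms \<open>1 \<le> real t\<close> by simp
  qed
qed

lemma AE_eventually_occurrences_le:
  assumes "m > 0" "\<And>l. pmf P l \<le> q" "q < 1 / real m"
  shows "AE \<omega> in stream_space (uss_row_measure P). eventually (\<lambda>t. \<forall>a\<le>t. \<forall>l.
           real (occurrences (Some l) \<omega> a (t - a)) \<le> real (t - a) / real m + (ln (real t))^2) sequentially"
proof -
  interpret R: prob_space "uss_row_measure P" by (rule prob_space_uss_row_measure)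
  interpret S: prob_space "stream_space (uss_row_measure P)" by (rule R.prob_space_stream_space)
  define A where "A t = (\<Union>a\<le>t. heavy_window P a (t - a) (real (t - a) / real m + (ln (real t))^2))" for t
  have "0 \<le> q" using assms(2)[of 0] pmf_nonneg[of P 0] by linarith
  then obtain z where z: "1 < z" "1 + (z - 1) * q \<le> z powr (1 / real m)"
    using exists_powr_base assms(1,3) by blast
  have "summable (\<lambda>t. measure (stream_space (uss_row_measure P)) (A t))"
    using measure_heavy_windows_le[OF z _ assms(2)] unfolding A_def
    by (intro summable_comparison_test_ev[OF always_eventually summable_poly_div_powr_ln_squared[OF z(1)]]) simp
  then have "AE \<omega> in stream_space (uss_row_measure P).
      eventually (\<lambda>t. \<omega> \<in> space (stream_space (uss_row_measure P)) - A t) sequentially"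
    by (intro borel_cantelli_AE1) (auto simp: A_def S.emeasure_eq_measure)
  then show ?thesis
    by (rule eventually_mono) (auto elim!: eventually_mono simp: A_def heavy_window_def not_less)
qed

theorem lemma3:
  fixes P :: "nat pmf" and m :: nat
  assumes "m > 0"
    and "\<And>i. pmf P (Suc i) \<le> pmf P i"
    and "pmf P 0 < 1 / real m"
  shows "AE \<omega> in stream_space (uss_row_measure P).
           eventually (\<lambda>t.
               0 \<le> real t / real m - real (Nmin m \<omega> t)
             \<and> real t / real m - real (Nmin m \<omega> t) \<le> real m * (ln (real t))^2 + real m
             \<and> 0 \<le> real (Nmax m \<omega> t) - real t / real m
             \<and> real (Nmax m \<omega> t) - real t / real m \<le> (ln (real t))^2 + 1) sequentially"
proof -
  have "decseq (pmf P)" using assms(2) by (simp add: decseq_Suc_iff)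
  then have "pmf P l \<le> pmf P 0" for l by (simp add: decseq_def)
  then have "AE \<omega> in stream_space (uss_row_measure P). eventually (\<lambda>t. \<forall>a\<le>t. \<forall>l.
      real (occurrences (Some l) \<omega> a (t - a)) \<le> real (t - a) / real m + (ln (real t))^2) sequentially"
    using AE_eventually_occurrences_le assms(1,3) by blast
  then show ?thesis
    by (elim eventually_mono) (rule Nmin_Nmax_deviation_if_occurrences_le[OF assms(1)], simp_all)
qed

end
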